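(* Let $0<\epsilon\le 0.01$ and let $\delta>0$ be a parameter. There is an algorithm which, given $O(\delta/\epsilon^6)$ i.i.d. samples from an arbitrary unknown distribution $\mathbb{K}$ of $y\in(0,\infty)$ (i.e. a learning-to-rent problem with only one possible feature vector $x$), outputs a threshold $\theta_A$ such that, with probability at least $1-O\!\left(\frac{e^{-\Omega(\delta/\epsilon)}}{\epsilon^2}\right)$, $$\mathrm{CR}(\theta_A,\mathbb{K})\le(1+\epsilon)\inf_{\theta\ge0}\mathrm{CR}(\theta,\mathbb{K}).$$
   Context: Ski-rental setting: buying costs $1$, renting costs $1$ per unit time, season length $y>0$; a threshold strategy with threshold $\theta\ge0$ rents until time $\theta$ and then buys. Its competitive ratio on $y$ is $g(\theta,y)=\frac{1+\theta}{\min\{1,y\}}$ if $y\ge\theta$ and $g(\theta,y)=\frac{y}{\min\{1,y\}}$ otherwise. For a distribution $\mathbb{K}$ of $y$, $\mathrm{CR}(\theta,\mathbb{K})=\mathbb{E}_{y\sim\mathbb{K}}[g(\theta,y)]$. *)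

theory Defs
  imports "HOL-Probability.Probability"
begin

text \<open>Competitive ratio of threshold \<theta> on season length y.\<close>
definition g :: "real \<Rightarrow> real \<Rightarrow> real" where
  "g \<theta> y = (if y \<ge> \<theta> then (1 + \<theta>) / min 1 y else y / min 1 y)"

text \<open>Expected competitive ratio (may be infinite, hence ennreal).\<close>
definition CR :: "real \<Rightarrow> real measure \<Rightarrow> ennreal" where
  "CR \<theta> K = (\<integral>\<^sup>+ y. ennreal (g \<theta> y) \<partial>K)"

definition OPT :: "real measure \<Rightarrow> ennreal" where
  "OPT K = (INF \<theta>\<in>{0..}. CR \<theta> K)"

definition admissible :: "real measure \<Rightarrow> bool" where
  "admissible K \<longleftrightarrow> prob_space K \<and> sets K = sets borel \<and> emeasure K {0<..} = 1"

end

theory Submission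
  imports Defs
begin

(*
  Rounding a threshold up to the next multiple of h = \<epsilon>/4, or capping it at some T \<ge> 1/h,
  costs at most a factor 1 + h pointwise in y, so the grid h, 2h, ..., Nh with N \<approx> 16/\<epsilon>\<^sup>2
  contains a (1 + h)-optimal threshold.  On this grid the ratio g is bounded by 3/h, so by
  Hoeffding's inequality and a union bound, with probability at least 1 - 2N exp (-n \<epsilon>\<^sup>4/512)
  all N empirical mean ratios lie within 3\<epsilon>/8 of their expectations.  The empirical minimiser
  over the grid is then 3\<epsilon>/4-optimal on the grid in the additive sense, and since every
  expected ratio is at least 1 this additive error is also a relative one.
*)

lemma g_ge_1:
  assumes "0 \<le> \<theta>" "0 < y"
  shows "1 \<le> g \<theta> y"
  using assms by (auto simp: g_def min_def field_simps)

lemma g_le: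
  assumes "0 < t" "0 < y"
  shows "g t y \<le> 1 + t + 1 / t"
proof (cases "t \<le> y")
  case True
  show ?thesis
  proof (cases "y \<le> 1")
    case True
    have "(1 + t) / y \<le> (1 + t) / t"
      using \<open>t \<le> y\<close> assms by (intro divide_left_mono) auto
    also have "\<dots> = 1 + 1 / t"
      using assms by (simp add: field_simps)
    finally show ?thesis
      using \<open>t \<le> y\<close> True assms by (simp add: g_def min_def)
  next
    case False
    then show ?thesis using \<open>t \<le> y\<close> assms by (simp add: g_def min_def)
  qed
next
  case False
  then have "g t y = max 1 y" using assms by (auto simp: g_def min_def max_def)
  moreover have "max 1 y \<le> 1 + t" using False assms by simp
  moreover have "0 < 1 / t" using assms by simp
  ultimately show ?thesis by linarith
qed

lemma g_measurable [measurable]: "g t \<in> borel_measurable borel"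
  unfolding g_def by measurable

lemma g_grid_range:
  assumes h: "0 < h" "h \<le> 1/2" and t: "h \<le> t" "t \<le> 1 / h + h" and "0 < y"
  shows "g t y \<in> {0..3 / h}"
proof -
  have "h + h * h \<le> 1" using h mult_mono[of h "1/2" h "1/2"] by simp
  then have "1 + h \<le> 1 / h" using h by (simp add: field_simps)
  moreover have "1 / t \<le> 1 / h" using h t by (intro divide_left_mono) auto
  moreover have "g t y \<le> 1 + t + 1 / t" "1 \<le> g t y" using h t \<open>0 < y\<close> by (auto intro: g_le g_ge_1)
  ultimately show ?thesis using t by (simp add: field_simps)
qed

lemma g_round_up:
  assumes "0 \<le> h" "0 \<le> \<theta>" "\<theta> \<le> t" "t \<le> \<theta> + h" "0 < y"
  shows "g t y \<le> (1 + h) * g \<theta> y"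
proof -
  have g1: "1 \<le> g \<theta> y" using assms by (intro g_ge_1)
  have "0 \<le> h * \<theta>" using assms by simp
  moreover have "(1 + h) * (1 + \<theta>) = 1 + \<theta> + h + h * \<theta>" by (simp add: algebra_simps)
  ultimately have step: "1 + t \<le> (1 + h) * (1 + \<theta>)" using assms by linarith
  consider "y < \<theta>" | "\<theta> \<le> y" "y < t" | "t \<le> y" by linarith
  then show ?thesis
  proof cases
    case 1
    then have "g t y = g \<theta> y" using assms by (simp add: g_def)
    then show ?thesis using assms g1 by (simp add: algebra_simps)
  next
    case 2
    then show ?thesis using assms g1 step
      by (cases "y \<le> 1") (auto simp: g_def min_def algebra_simps)
  next
    case 3
    then have "g t y = (1 + t) / min 1 y" "g \<theta> y = (1 + \<theta>) / min 1 y"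
      using assms by (auto simp: g_def)
    then show ?thesis using assms step by (simp add: divide_right_mono)
  qed
qed

lemma g_cap:
  assumes "0 \<le> h" "1 \<le> T" "1 \<le> h * T" "T \<le> \<theta>" "0 < y"
  shows "g T y \<le> (1 + h) * g \<theta> y"
proof -
  have g1: "1 \<le> g \<theta> y" using assms by (intro g_ge_1) auto
  consider "y < T" | "T \<le> y" "y < \<theta>" | "\<theta> \<le> y" by linarith
  then show ?thesis
  proof cases
    case 1
    then have "g T y = g \<theta> y" using assms by (simp add: g_def)
    then show ?thesis using assms g1 by (simp add: algebra_simps)
  next
    case 2
    then have "g T y = 1 + T" "g \<theta> y = y" using assms by (auto simp: g_def min_def)
    moreover have "h * T \<le> h * y" using 2 assms by (simp add: mult_left_mono)
    ultimately show ?thesis using assms 2 by (simp add: algebra_simps)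
  next
    case 3
    then have "g T y = (1 + T) / min 1 y" "g \<theta> y = (1 + \<theta>) / min 1 y"
      using assms by (auto simp: g_def)
    moreover have "1 + T \<le> (1 + h) * (1 + \<theta>)"
    proof -
      have "0 \<le> h * \<theta>" using assms by simp
      moreover have "(1 + h) * (1 + \<theta>) = 1 + \<theta> + h + h * \<theta>" by (simp add: algebra_simps)
      ultimately show ?thesis using assms by linarith
    qed
    ultimately show ?thesis using assms by (simp add: divide_right_mono)
  qed
qed

lemma admissible_AE_pos:
  assumes "admissible K"
  shows "AE y in K. 0 < y"
proof -
  interpret prob_space K using assms by (simp add: admissible_def)
  have "prob {0<..} = 1" using assms by (simp add: admissible_def emeasure_eq_measure)
  from AE_prob_1[OF this] show ?thesis by simp
qed

lemma admissible_g_measurable [measurable]: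
  assumes "admissible K"
  shows "g t \<in> borel_measurable K"
proof -
  have "sets K = sets borel" using assms by (simp add: admissible_def)
  then show ?thesis using measurable_cong_sets[of K borel borel borel] by simp
qed

lemma CR_ge_1:
  assumes K: "admissible K" and "0 \<le> \<theta>"
  shows "1 \<le> CR \<theta> K"
proof -
  interpret prob_space K using K by (simp add: admissible_def)
  have "(\<integral>\<^sup>+ y. 1 \<partial>K) \<le> (\<integral>\<^sup>+ y. ennreal (g \<theta> y) \<partial>K)"
    using admissible_AE_pos[OF K]
    by (intro nn_integral_mono_AE) (auto elim!: eventually_mono intro: g_ge_1 assms)
  then show ?thesis by (simp add: CR_def emeasure_space_1)
qed

lemma CR_eq_integral:
  assumes K: "admissible K" and t: "0 < t"
  shows "CR t K = ennreal (\<integral>y. g t y \<partial>K)"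
proof -
  interpret prob_space K using K by (simp add: admissible_def)
  have "AE y in K. norm (g t y) \<le> 1 + t + 1 / t"
    using admissible_AE_pos[OF K]
  proof (rule eventually_mono)
    fix y :: real assume "0 < y"
    then have "1 \<le> g t y" "g t y \<le> 1 + t + 1 / t" using t by (auto intro: g_ge_1 g_le)
    then show "norm (g t y) \<le> 1 + t + 1 / t" by simp
  qed
  then have int: "integrable K (g t)"
    by (rule integrable_const_bound) (use K in measurable)
  have "AE y in K. 0 \<le> g t y"
    using admissible_AE_pos[OF K]
  proof (rule eventually_mono)
    fix y :: real assume "0 < y"
    then show "0 \<le> g t y" using g_ge_1[of t y] t by linarith
  qed
  then show ?thesis
    unfolding CR_def by (intro nn_integral_eq_integral int)
qed

lemma CR_mono_pointwise:
  assumes K: "admissible K" and "0 \<le> c" "0 \<le> \<theta>"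
    and le: "\<And>y. 0 < y \<Longrightarrow> g t y \<le> c * g \<theta> y"
  shows "CR t K \<le> ennreal c * CR \<theta> K"
proof -
  have "CR t K \<le> (\<integral>\<^sup>+ y. ennreal c * ennreal (g \<theta> y) \<partial>K)"
    unfolding CR_def using admissible_AE_pos[OF K]
  proof (rule nn_integral_mono_AE[OF eventually_mono])
    fix y :: real assume "0 < y"
    then have "ennreal (g t y) \<le> ennreal (c * g \<theta> y)" by (intro ennreal_leI le)
    also have "\<dots> = ennreal c * ennreal (g \<theta> y)"
      using assms g_ge_1[of \<theta> y] \<open>0 < y\<close> by (simp add: ennreal_mult)
    finally show "ennreal (g t y) \<le> ennreal c * ennreal (g \<theta> y)" .
  qed
  also have "\<dots> = ennreal c * CR \<theta> K"
    unfolding CR_def using K by (intro nn_integral_cmult) measurable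
  finally show ?thesis .
qed

lemma CR_grid_approx:
  assumes K: "admissible K" and h: "0 < h" "h \<le> 1" and N: "1 \<le> N" "1 / h \<le> h * real N"
    and \<theta>: "0 \<le> \<theta>"
  shows "\<exists>j\<in>{1..N}. CR (h * real j) K \<le> ennreal (1 + h) * CR \<theta> K"
proof (cases "\<theta> \<le> h * real N")
  case True
  define j where "j = max 1 (nat \<lceil>\<theta> / h\<rceil>)"
  have "\<theta> / h \<le> real N" using True h by (simp add: field_simps)
  then have j: "j \<in> {1..N}" using N by (simp add: j_def nat_le_iff ceiling_le_iff)
  have "0 \<le> \<theta> / h" using \<theta> h by simp
  then have "\<theta> / h \<le> real (nat \<lceil>\<theta> / h\<rceil>)" "real (nat \<lceil>\<theta> / h\<rceil>) < \<theta> / h + 1"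
    by linarith+
  moreover have "real (nat \<lceil>\<theta> / h\<rceil>) \<le> real j" "real j \<le> max 1 (real (nat \<lceil>\<theta> / h\<rceil>))"
    by (simp_all add: j_def)
  ultimately have "\<theta> / h \<le> real j" "real j \<le> \<theta> / h + 1"
    using \<open>0 \<le> \<theta> / h\<close> by linarith+
  then have "\<theta> \<le> h * real j" "h * real j \<le> \<theta> + h"
    using h by (simp_all add: field_simps)
  then have "CR (h * real j) K \<le> ennreal (1 + h) * CR \<theta> K"
    using h \<theta> by (intro CR_mono_pointwise[OF K] g_round_up) auto
  with j show ?thesis by blast
next
  case False
  have "1 \<le> 1 / h" using h by simp
  then have "1 \<le> h * real N" using N by linarith
  then have "CR (h * real N) K \<le> ennreal (1 + h) * CR \<theta> K"
    using h N False \<theta> by (intro CR_mono_pointwise[OF K] g_cap) (auto simp: field_simps)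
  with N show ?thesis by auto
qed

lemma grid_near_minimizer_competitive:
  assumes K: "admissible K" and h: "0 < h" "h \<le> 1" and N: "1 / h \<le> h * real N"
    and k: "k \<in> {1..N}" and \<eta>: "0 \<le> \<eta>" "h + \<eta> \<le> \<epsilon>"
    and near: "\<And>j. j \<in> {1..N} \<Longrightarrow> (\<integral>y. g (h * real k) y \<partial>K) \<le> (\<integral>y. g (h * real j) y \<partial>K) + \<eta>"
  shows "CR (h * real k) K \<le> ennreal (1 + \<epsilon>) * OPT K"
proof -
  define \<mu> where "\<mu> j = (\<integral>y. g (h * real j) y \<partial>K)" for j
  have CR_\<mu>: "CR (h * real j) K = ennreal (\<mu> j)" if "j \<in> {1..N}" for j
    unfolding \<mu>_def using that h by (intro CR_eq_integral[OF K]) auto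
  have \<mu>_ge_1: "1 \<le> \<mu> k"
    using CR_ge_1[OF K, of "h * real k"] CR_\<mu>[OF k] h by simp
  have "ennreal (\<mu> k / (1 + \<epsilon>)) \<le> CR \<theta> K" if \<theta>: "\<theta> \<in> {0..}" for \<theta>
  proof (cases "CR \<theta> K")
    case (real c)
    have "1 \<le> c" using CR_ge_1[OF K] \<theta> real by fastforce
    obtain j where j: "j \<in> {1..N}" and "CR (h * real j) K \<le> ennreal (1 + h) * CR \<theta> K"
      using CR_grid_approx[OF K h _ N] \<theta> k by fastforce
    moreover have "ennreal (1 + h) * CR \<theta> K = ennreal ((1 + h) * c)"
      using real h by (simp add: ennreal_mult)
    ultimately have "\<mu> j \<le> (1 + h) * c"
      using CR_\<mu>[OF j] real h by (simp add: ennreal_le_iff)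
    then have "\<mu> k \<le> (1 + h) * c + \<eta>" using near[OF j] by (simp add: \<mu>_def)
    also have "\<dots> \<le> (1 + \<epsilon>) * c"
      using \<open>1 \<le> c\<close> \<eta> mult_right_mono[of "h + \<eta>" \<epsilon> c] mult_right_mono[of 1 c \<eta>]
      by (simp add: algebra_simps)
    finally show ?thesis using real h \<eta> by (simp add: pos_divide_le_eq mult.commute)
  qed simp
  then have "ennreal (\<mu> k / (1 + \<epsilon>)) \<le> OPT K" unfolding OPT_def by (rule INF_greatest)
  then have "ennreal (1 + \<epsilon>) * ennreal (\<mu> k / (1 + \<epsilon>)) \<le> ennreal (1 + \<epsilon>) * OPT K"
    by (rule mult_left_mono) simp
  moreover have "ennreal (1 + \<epsilon>) * ennreal (\<mu> k / (1 + \<epsilon>)) = ennreal (\<mu> k)"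
    using h \<eta> \<mu>_ge_1 ennreal_mult[of "1 + \<epsilon>" "\<mu> k / (1 + \<epsilon>)"] by simp
  ultimately show ?thesis using CR_\<mu>[OF k] by simp
qed

lemma indep_vars_PiM_components:
  assumes K: "prob_space K" and I: "finite I" "I \<noteq> {}"
  shows "prob_space.indep_vars (PiM I (\<lambda>_. K)) (\<lambda>_. K) (\<lambda>i S. S i) I"
proof -
  interpret M: prob_space "PiM I (\<lambda>_. K)" using K I by (intro prob_space_PiM) auto
  have "distr (PiM I (\<lambda>_. K)) (PiM I (\<lambda>_. K)) (\<lambda>S. \<lambda>i\<in>I. S i)
      = distr (PiM I (\<lambda>_. K)) (PiM I (\<lambda>_. K)) (\<lambda>S. S)"
    by (rule distr_cong) (auto simp: space_PiM PiE_def extensional_def restrict_def fun_eq_iff)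
  also have "\<dots> = PiM I (\<lambda>i. distr (PiM I (\<lambda>_. K)) K (\<lambda>S. S i))"
    using distr_PiM_component[of I "\<lambda>_. K"] K by (simp cong: PiM_cong)
  finally show ?thesis
    by (subst M.indep_vars_iff_distr_eq_PiM'[OF I(2)]) auto
qed

lemma empirical_mean_deviation_prob:
  fixes f :: "'a \<Rightarrow> real"
  assumes K: "prob_space K" and n: "0 < n" and f: "f \<in> borel_measurable K"
    and bounded: "AE y in K. f y \<in> {a..b}" and "a < b" and "0 \<le> \<eta>"
  shows "measure (PiM {..<n} (\<lambda>_. K))
      {S \<in> space (PiM {..<n} (\<lambda>_. K)). \<eta> \<le> \<bar>(\<Sum>i<n. f (S i)) / real n - (\<integral>y. f y \<partial>K)\<bar>}
    \<le> 2 * exp (-2 * real n * \<eta>\<^sup>2 / (b - a)\<^sup>2)"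
proof -
  let ?M = "PiM {..<n} (\<lambda>_. K)"
  interpret M: prob_space ?M using K by (intro prob_space_PiM) auto
  have coord: "(\<lambda>S. S i) \<in> measurable ?M K" if "i < n" for i
    using that by (intro measurable_component_singleton) simp
  have distr_coord: "distr ?M K (\<lambda>S. S i) = K" if "i < n" for i
    using distr_PiM_component[of "{..<n}" "\<lambda>_. K" i] K that by simp
  have distr_f: "distr ?M borel (\<lambda>S. f (S i)) = distr K borel f" if "i < n" for i
    using distr_distr[OF f coord[OF that]] distr_coord[OF that] by (simp add: comp_def)
  have mean: "(\<integral>y. f y \<partial>K) = M.expectation (\<lambda>S. f (S 0))"
    using integral_distr[OF coord[OF n] f] distr_coord[OF n] by simp
  interpret Hoeffding_ineq_iid ?M "{..<n}" "\<lambda>i S. f (S i)" "\<lambda>S. f (S 0)" a b "\<integral>y. f y \<partial>K"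
  proof unfold_locales
    show "M.indep_vars (\<lambda>_. borel) (\<lambda>i S. f (S i)) {..<n}"
      using n by (intro M.indep_vars_compose2[OF indep_vars_PiM_components[OF K]] f) auto
    show "distr ?M borel (\<lambda>S. f (S i)) = distr ?M borel (\<lambda>S. f (S 0))" if "i \<in> {..<n}" for i
      using distr_f[of i] distr_f[OF n] that by simp
    show "(\<lambda>S. f (S 0)) \<in> borel_measurable ?M"
      using measurable_comp[OF coord[OF n] f] by (simp add: comp_def)
    show "AE S in ?M. f (S 0) \<in> {a..b}"
      using K n bounded by (intro AE_PiM_component) auto
    show "(\<integral>y. f y \<partial>K) \<equiv> M.expectation (\<lambda>S. f (S 0))" using mean by simp
  qed simp
  from Hoeffding_ineq_abs_ge'[OF \<open>0 \<le> \<eta>\<close> \<open>a < b\<close>] n show ?thesis by auto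
qed

definition empirical_CR :: "nat \<Rightarrow> real \<Rightarrow> (nat \<Rightarrow> real) \<Rightarrow> real" where
  "empirical_CR n t S = (\<Sum>i<n. g t (S i)) / real n"

definition grid_erm :: "real \<Rightarrow> nat \<Rightarrow> nat \<Rightarrow> (nat \<Rightarrow> real) \<Rightarrow> nat" where
  "grid_erm h N n S =
    (LEAST k. k \<in> {1..N} \<and> (\<forall>j\<in>{1..N}. empirical_CR n (h * real k) S \<le> empirical_CR n (h * real j) S))"

lemma grid_erm_minimizes:
  assumes "1 \<le> N"
  shows "grid_erm h N n S \<in> {1..N} \<and>
    (\<forall>j\<in>{1..N}. empirical_CR n (h * real (grid_erm h N n S)) S \<le> empirical_CR n (h * real j) S)"
proof -
  let ?f = "\<lambda>k. empirical_CR n (h * real k) S"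
  have fin: "finite (?f ` {1..N})" "?f ` {1..N} \<noteq> {}" using assms by auto
  obtain k where "k \<in> {1..N}" "?f k = Min (?f ` {1..N})" using Min_in[OF fin] by auto
  then have "k \<in> {1..N} \<and> (\<forall>j\<in>{1..N}. ?f k \<le> ?f j)" using fin by auto
  then show ?thesis unfolding grid_erm_def by (rule LeastI)
qed

lemma grid_erm_measurable:
  assumes [measurable]: "\<And>t. g t \<in> borel_measurable M"
  shows "grid_erm h N n \<in> measurable (PiM {..<n} (\<lambda>_. M)) (count_space UNIV)"
proof -
  have [measurable]: "empirical_CR n t \<in> borel_measurable (PiM {..<n} (\<lambda>_. M))" for t
    unfolding empirical_CR_def by measurable
  have [measurable]: "Measurable.pred (PiM {..<n} (\<lambda>_. M)) (\<lambda>S. empirical_CR n a S \<le> empirical_CR n b S)"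
    for a b unfolding Measurable.pred_def by (rule borel_measurable_le) simp_all
  show ?thesis unfolding grid_erm_def by measurable
qed

lemma grid_erm_competitive_prob:
  assumes K: "admissible K" and n: "0 < n" and h: "0 < h" "h \<le> 1/2"
    and N: "1 / h \<le> h * real N" "h * real N \<le> 1 / h + h" and \<eta>: "0 \<le> \<eta>" "h + 2 * \<eta> \<le> \<epsilon>"
  shows "1 - real N * (2 * exp (-2 * real n * \<eta>\<^sup>2 / (3 / h)\<^sup>2))
    \<le> measure (PiM {..<n} (\<lambda>_. K))
        {S \<in> space (PiM {..<n} (\<lambda>_. K)). CR (h * real (grid_erm h N n S)) K \<le> ennreal (1 + \<epsilon>) * OPT K}"
proof -
  let ?M = "PiM {..<n} (\<lambda>_. K)"
  have pK: "prob_space K" using K by (simp add: admissible_def)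
  interpret M: prob_space ?M using pK by (intro prob_space_PiM) auto
  have [measurable]: "g t \<in> borel_measurable K" for t using K by measurable
  have [measurable]: "grid_erm h N n \<in> measurable ?M (count_space UNIV)"
    by (intro grid_erm_measurable) measurable
  have N1: "1 \<le> N" using N h by (cases N) (auto simp: field_simps)
  have grid: "h \<le> h * real k" "h * real k \<le> 1 / h + h" if "k \<in> {1..N}" for k
  proof -
    show "h \<le> h * real k" using that h by simp
    have "h * real k \<le> h * real N" using that h by simp
    then show "h * real k \<le> 1 / h + h" using N(2) by linarith
  qed
  define \<mu> where "\<mu> k = (\<integral>y. g (h * real k) y \<partial>K)" for k
  define bad where "bad k = {S \<in> space ?M. \<eta> \<le> \<bar>empirical_CR n (h * real k) S - \<mu> k\<bar>}" for k
  have bad_sets: "bad k \<in> sets ?M" for k unfolding bad_def empirical_CR_def by measurable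
  have bad_prob: "measure ?M (bad k) \<le> 2 * exp (-2 * real n * \<eta>\<^sup>2 / (3 / h)\<^sup>2)" if "k \<in> {1..N}" for k
  proof -
    have "AE y in K. g (h * real k) y \<in> {0..3 / h}"
      using admissible_AE_pos[OF K] by (rule eventually_mono) (use g_grid_range h grid[OF that] in auto)
    then have "measure ?M (bad k) \<le> 2 * exp (-2 * real n * \<eta>\<^sup>2 / (3 / h - 0)\<^sup>2)"
      unfolding bad_def empirical_CR_def \<mu>_def using pK n h \<eta>
      by (intro empirical_mean_deviation_prob) auto
    then show ?thesis by simp
  qed
  define good where "good = {S \<in> space ?M. CR (h * real (grid_erm h N n S)) K \<le> ennreal (1 + \<epsilon>) * OPT K}"
  have "good \<in> sets ?M"
  proof -
    define P where "P k \<longleftrightarrow> CR (h * real k) K \<le> ennreal (1 + \<epsilon>) * OPT K" for k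
    have [measurable]: "P \<in> measurable (count_space UNIV) (count_space UNIV)" by simp
    show ?thesis unfolding good_def P_def[symmetric] by measurable
  qed
  have "space ?M - (\<Union>k\<in>{1..N}. bad k) \<subseteq> good"
  proof
    fix S assume S: "S \<in> space ?M - (\<Union>k\<in>{1..N}. bad k)"
    then have close: "\<bar>empirical_CR n (h * real j) S - \<mu> j\<bar> < \<eta>" if "j \<in> {1..N}" for j
      using that by (auto simp: bad_def not_le)
    obtain k: "grid_erm h N n S \<in> {1..N}"
      and erm: "\<And>j. j \<in> {1..N} \<Longrightarrow>
        empirical_CR n (h * real (grid_erm h N n S)) S \<le> empirical_CR n (h * real j) S"
      using grid_erm_minimizes[OF N1] by blast
    have "\<mu> (grid_erm h N n S) \<le> \<mu> j + 2 * \<eta>" if "j \<in> {1..N}" for j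
      using close[OF that] close[OF k] erm[OF that] by linarith
    then have "CR (h * real (grid_erm h N n S)) K \<le> ennreal (1 + \<epsilon>) * OPT K"
      using h \<eta> by (intro grid_near_minimizer_competitive[OF K h(1) _ N(1) k, where \<eta> = "2 * \<eta>"])
        (auto simp: \<mu>_def)
    then show "S \<in> good" using S by (simp add: good_def)
  qed
  then have "1 - measure ?M (\<Union>k\<in>{1..N}. bad k) \<le> measure ?M good"
    using M.prob_compl[of "\<Union>k\<in>{1..N}. bad k"] bad_sets M.finite_measure_mono \<open>good \<in> sets ?M\<close>
    by (metis (no_types, lifting) finite_atLeastAtMost sets.finite_UN)
  moreover have "measure ?M (\<Union>k\<in>{1..N}. bad k) \<le> (\<Sum>k\<in>{1..N}. measure ?M (bad k))"
    using bad_sets by (intro measure_UNION_le) auto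
  moreover have "(\<Sum>k\<in>{1..N}. measure ?M (bad k)) \<le> real N * (2 * exp (-2 * real n * \<eta>\<^sup>2 / (3 / h)\<^sup>2))"
    using sum_mono[of "{1..N}", OF bad_prob] by simp
  ultimately show ?thesis unfolding good_def by linarith
qed

lemma tail_bound_vacuous:
  fixes \<epsilon> \<delta> :: real
  assumes \<epsilon>: "0 < \<epsilon>" "\<epsilon> \<le> 1/100" and \<delta>: "0 < \<delta>" "\<delta> / \<epsilon>^6 < 1"
  shows "1 - 200 * exp (- (1/512) * \<delta> / \<epsilon>) / \<epsilon>^2 \<le> 0"
proof -
  have "\<epsilon>^6 \<le> \<epsilon>" using \<epsilon> power_decreasing[of 1 6 \<epsilon>] by simp
  then have "\<delta> / \<epsilon> < 1" using \<epsilon> \<delta> by (simp add: field_simps)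
  then have "1/2 \<le> 1 - (1/512) * \<delta> / \<epsilon>" using \<epsilon> \<delta> by (simp add: field_simps)
  also have "\<dots> \<le> exp (- (1/512) * \<delta> / \<epsilon>)"
    using exp_ge_add_one_self[of "- (1/512) * \<delta> / \<epsilon>"] by simp
  finally have "1/2 \<le> exp (- (1/512) * \<delta> / \<epsilon>)" .
  moreover have "0 < \<epsilon>^2" "\<epsilon>^2 \<le> 1" using \<epsilon> by (simp_all add: power_le_one)
  ultimately show ?thesis by (simp add: field_simps)
qed

lemma tail_bound_sample_size:
  fixes \<epsilon> \<delta> :: real
  assumes \<epsilon>: "0 < \<epsilon>" "\<epsilon> \<le> 1/100" and \<delta>: "0 < \<delta>"
    and N: "real N < 16 / \<epsilon>^2 + 1" and n: "\<delta> / \<epsilon>^6 - 1 < real n"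
  shows "real N * (2 * exp (-2 * real n * (3 * \<epsilon> / 8)\<^sup>2 / (3 / (\<epsilon> / 4))\<^sup>2))
    \<le> 200 * exp (- (1/512) * \<delta> / \<epsilon>) / \<epsilon>^2"
proof -
  have exponent: "-2 * real n * (3 * \<epsilon> / 8)\<^sup>2 / (3 / (\<epsilon> / 4))\<^sup>2 = - (real n * \<epsilon>^4 / 512)"
    using \<epsilon> by (simp add: field_simps power2_eq_square power4_eq_xxxx)
  have "\<delta> / \<epsilon>^2 - \<epsilon>^4 = (\<delta> / \<epsilon>^6 - 1) * \<epsilon>^4"
    using \<epsilon> by (simp add: field_simps eval_nat_numeral)
  also have "\<dots> < real n * \<epsilon>^4" using n \<epsilon> by simp
  finally have "\<delta> / \<epsilon>^2 - \<epsilon>^4 < real n * \<epsilon>^4" .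
  moreover have "\<delta> / \<epsilon> \<le> \<delta> / \<epsilon>^2"
    using \<epsilon> \<delta> by (intro divide_left_mono) (auto simp: power2_eq_square mult_le_cancel_left1)
  moreover have "\<epsilon>^4 \<le> 1" using \<epsilon> by (simp add: power_le_one)
  ultimately have "- (real n * \<epsilon>^4 / 512) \<le> 1 + (- (1/512) * \<delta> / \<epsilon>)" by simp
  then have "exp (- (real n * \<epsilon>^4 / 512)) \<le> exp 1 * exp (- (1/512) * \<delta> / \<epsilon>)"
    by (simp flip: exp_add)
  also have "\<dots> \<le> 3 * exp (- (1/512) * \<delta> / \<epsilon>)" using exp_le by simp
  finally have E: "exp (- (real n * \<epsilon>^4 / 512)) \<le> 3 * exp (- (1/512) * \<delta> / \<epsilon>)" .
  have "1 \<le> 1 / \<epsilon>^2" using \<epsilon> by (simp add: power_le_one field_simps)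
  then have "real N \<le> 17 / \<epsilon>^2" using N by simp
  then have "real N * (2 * exp (- (real n * \<epsilon>^4 / 512)))
      \<le> 17 / \<epsilon>^2 * (2 * (3 * exp (- (1/512) * \<delta> / \<epsilon>)))"
    using E by (intro mult_mono mult_left_mono) auto
  also have "\<dots> = 102 * exp (- (1/512) * \<delta> / \<epsilon>) / \<epsilon>^2" by simp
  also have "\<dots> \<le> 200 * exp (- (1/512) * \<delta> / \<epsilon>) / \<epsilon>^2"
    by (intro divide_right_mono mult_right_mono) auto
  finally show ?thesis by (simp only: exponent)
qed

lemma grid_erm_learner:
  fixes \<epsilon> \<delta> :: real
  assumes \<epsilon>: "0 < \<epsilon>" "\<epsilon> \<le> 1/100" and \<delta>: "0 < \<delta>"
  defines "h \<equiv> \<epsilon> / 4" and "N \<equiv> nat \<lceil>16 / \<epsilon>^2\<rceil>" and "n \<equiv> nat \<lfloor>\<delta> / \<epsilon>^6\<rfloor>"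
  shows "real n \<le> \<delta> / \<epsilon>^6"
    and "(\<lambda>S. h * real (grid_erm h N n S)) \<in> borel_measurable (PiM {..<n} (\<lambda>_. borel))"
    and "admissible K \<Longrightarrow> 1 - 200 * exp (- (1/512) * \<delta> / \<epsilon>) / \<epsilon>^2
      \<le> measure (PiM {..<n} (\<lambda>_. K))
          {S \<in> space (PiM {..<n} (\<lambda>_. K)). CR (h * real (grid_erm h N n S)) K \<le> ennreal (1 + \<epsilon>) * OPT K}"
proof -
  have "0 < \<delta> / \<epsilon>^6" using \<epsilon> \<delta> by simp
  then show "real n \<le> \<delta> / \<epsilon>^6" unfolding n_def by linarith
  from \<open>0 < \<delta> / \<epsilon>^6\<close> have n: "\<delta> / \<epsilon>^6 - 1 < real n" unfolding n_def by linarith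
  have [measurable]: "grid_erm h N n \<in> measurable (PiM {..<n} (\<lambda>_. borel)) (count_space UNIV)"
    by (intro grid_erm_measurable) measurable
  show "(\<lambda>S. h * real (grid_erm h N n S)) \<in> borel_measurable (PiM {..<n} (\<lambda>_. borel))"
    by measurable
  assume K: "admissible K"
  show "1 - 200 * exp (- (1/512) * \<delta> / \<epsilon>) / \<epsilon>^2 \<le> measure (PiM {..<n} (\<lambda>_. K))
      {S \<in> space (PiM {..<n} (\<lambda>_. K)). CR (h * real (grid_erm h N n S)) K \<le> ennreal (1 + \<epsilon>) * OPT K}"
  proof (cases "n = 0")
    case True
    with n tail_bound_vacuous[OF \<epsilon> \<delta>] show ?thesis by (simp add: order.trans[OF _ measure_nonneg])
  next
    case False
    have h: "0 < h" "h \<le> 1/2" "1 / h\<^sup>2 = 16 / \<epsilon>^2" using \<epsilon> by (auto simp: h_def power2_eq_square)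
    have "1 / h\<^sup>2 \<le> real N" "real N < 1 / h\<^sup>2 + 1" unfolding N_def h(3) using \<epsilon> by (simp_all, linarith)
    then have N: "1 / h \<le> h * real N" "h * real N \<le> 1 / h + h" "real N < 16 / \<epsilon>^2 + 1"
      using h by (auto simp: field_simps power2_eq_square)
    have "1 - real N * (2 * exp (-2 * real n * (3 * \<epsilon> / 8)\<^sup>2 / (3 / h)\<^sup>2))
      \<le> measure (PiM {..<n} (\<lambda>_. K))
          {S \<in> space (PiM {..<n} (\<lambda>_. K)). CR (h * real (grid_erm h N n S)) K \<le> ennreal (1 + \<epsilon>) * OPT K}"
      using False \<epsilon> by (intro grid_erm_competitive_prob[OF K _ h(1,2) N(1,2)]) (auto simp: h_def)
    moreover have "real N * (2 * exp (-2 * real n * (3 * \<epsilon> / 8)\<^sup>2 / (3 / h)\<^sup>2))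
      \<le> 200 * exp (- (1/512) * \<delta> / \<epsilon>) / \<epsilon>^2"
      unfolding h_def by (rule tail_bound_sample_size[OF \<epsilon> \<delta> N(3) n])
    ultimately show ?thesis by linarith
  qed
qed

theorem mainTheorem2:
  shows "\<exists>C1>0. \<exists>C2>0. \<exists>c>0. \<forall>\<epsilon> \<delta>::real. 0 < \<epsilon> \<and> \<epsilon> \<le> 1/100 \<and> 0 < \<delta> \<longrightarrow>
    (\<exists>(n::nat) (A :: (nat \<Rightarrow> real) \<Rightarrow> real).
       real n \<le> C1 * \<delta> / \<epsilon> ^ 6 \<and>
       A \<in> borel_measurable (PiM {..<n} (\<lambda>_. borel)) \<and>
       (\<forall>S. A S \<ge> 0) \<and>
       (\<forall>K. admissible K \<longrightarrow>
          measure (PiM {..<n} (\<lambda>_. K))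
            {S \<in> space (PiM {..<n} (\<lambda>_. K)). CR (A S) K \<le> ennreal (1 + \<epsilon>) * OPT K}
          \<ge> 1 - C2 * exp (- c * \<delta> / \<epsilon>) / \<epsilon> ^ 2))"
proof (rule exI[of _ 1], rule conjI, simp, rule exI[of _ 200], rule conjI, simp,
    rule exI[of _ "1/512"], rule conjI, simp, intro allI impI, elim conjE)
  fix \<epsilon> \<delta> :: real
  assume \<epsilon>: "0 < \<epsilon>" "\<epsilon> \<le> 1/100" and \<delta>: "0 < \<delta>"
  let ?h = "\<epsilon> / 4" and ?N = "nat \<lceil>16 / \<epsilon>^2\<rceil>" and ?n = "nat \<lfloor>\<delta> / \<epsilon>^6\<rfloor>"
  show "\<exists>n A. real n \<le> 1 * \<delta> / \<epsilon> ^ 6 \<and>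
       A \<in> borel_measurable (PiM {..<n} (\<lambda>_. borel)) \<and>
       (\<forall>S. A S \<ge> 0) \<and>
       (\<forall>K. admissible K \<longrightarrow>
          measure (PiM {..<n} (\<lambda>_. K))
            {S \<in> space (PiM {..<n} (\<lambda>_. K)). CR (A S) K \<le> ennreal (1 + \<epsilon>) * OPT K}
          \<ge> 1 - 200 * exp (- (1/512) * \<delta> / \<epsilon>) / \<epsilon> ^ 2)"
    using grid_erm_learner[OF \<epsilon> \<delta>] \<epsilon>
    by (intro exI[of _ ?n] exI[of _ "\<lambda>S. ?h * real (grid_erm ?h ?N ?n S)"]) auto
qed

end
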